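(* Composites of admissible morphisms of quasi-schemoids are admissible, so finite basic quasi-schemoids and admissible morphisms form a category $\mathcal B$; and the assignments $(\mathcal C,S)\mapsto\mathbb K(\mathcal C,S)$, $\phi\mapsto\mathbb K(\phi)$ (with $\mathbb K(\phi)(s_\pi)=n^\phi_\pi s_{\phi(\pi)}$) define a functor $\mathbb K(-):\mathcal B\to\mathbf{Alg}$ to the category of (possibly nonunital) $\mathbb K$-algebras.
   Context: Write $s(f),t(f)$ for source and target. A quasi-schemoid is a pair $(\mathcal C,S)$ with $\mathcal C$ a small category and $S$ a partition of $mor(\mathcal C)$ into nonempty blocks such that for all $\sigma,\tau,\mu\in S$ and $f,g\in\mu$ the sets $\{(a,b)\in\sigma\times\tau: s(a)=t(b), a\circ b=f\}$ and the analogous set for $g$ have equal cardinality. It is finite if $mor(\mathcal C)$ is finite; unital if every block meeting $\{1_x\}$ is contained in it; basic if unital and $\mathcal C$ is a groupoid. A morphism of quasi-schemoids $\phi$ is a functor such that each $\phi(\sigma)$ lies in a unique block of the target, also denoted $\phi(\sigma)$; it is admissible if for every $x\in ob(\mathcal C)$, $\sigma\in S$ and $g\in\phi(\sigma)$ with $t(g)=\phi(x)$ there exists $f\in\sigma$ with $t(f)=x$ and $\phi(f)=g$. For admissible $\phi$ between finite basic quasi-schemoids, $n^\phi_\sigma$ denotes the positive integer with $\#(\phi^{-1}(g)\cap\{f\in\sigma:t(f)=x\})=n^\phi_\sigma$ for all $x$ and all $g\in\phi(\sigma)$ with $t(g)=\phi(x)$. $\mathbb K$ is a commutative ring with unit;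 the category algebra $\mathbb K\mathcal C$ is the free $\mathbb K$-module on $mor(\mathcal C)$ with product $a\cdot b=a\circ b$ if composable and $0$ otherwise; $s_\sigma=\sum_{f\in\sigma}f$; the schemoid algebra $\mathbb K(\mathcal C,S)$ is the subalgebra spanned by the $s_\sigma$; $\mathbb K(\phi)$ is extended $\mathbb K$-linearly. *)

theory Defs
  imports Main "HOL-Library.Equipollence"
begin

record ('o, 'm) cat =
  Obj :: "'o set"
  Mor :: "'m set"
  Dom :: "'m \<Rightarrow> 'o"
  Cod :: "'m \<Rightarrow> 'o"
  Id :: "'o \<Rightarrow> 'm"
  Comp :: "'m \<Rightarrow> 'm \<Rightarrow> 'm"

definition category :: "('o, 'm) cat \<Rightarrow> bool" where
  "category C \<longleftrightarrow>
     (\<forall>f\<in>Mor C. Dom C f \<in> Obj C \<and> Cod C f \<in> Obj C) \<and>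
     (\<forall>x\<in>Obj C. Id C x \<in> Mor C \<and> Dom C (Id C x) = x \<and> Cod C (Id C x) = x) \<and>
     (\<forall>f\<in>Mor C. \<forall>g\<in>Mor C. Dom C g = Cod C f \<longrightarrow>
        Comp C g f \<in> Mor C \<and> Dom C (Comp C g f) = Dom C f \<and> Cod C (Comp C g f) = Cod C g) \<and>
     (\<forall>f\<in>Mor C. Comp C (Id C (Cod C f)) f = f \<and> Comp C f (Id C (Dom C f)) = f) \<and>
     (\<forall>f\<in>Mor C. \<forall>g\<in>Mor C. \<forall>h\<in>Mor C. Dom C h = Cod C g \<longrightarrow> Dom C g = Cod C f \<longrightarrow>
        Comp C h (Comp C g f) = Comp C (Comp C h g) f)"

definition groupoid :: "('o, 'm) cat \<Rightarrow> bool" where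
  "groupoid C \<longleftrightarrow> category C \<and>
     (\<forall>f\<in>Mor C. \<exists>g\<in>Mor C. Dom C g = Cod C f \<and> Cod C g = Dom C f \<and>
        Comp C g f = Id C (Dom C f) \<and> Comp C f g = Id C (Cod C f))"

definition factor_pairs :: "('o, 'm) cat \<Rightarrow> 'm set \<Rightarrow> 'm set \<Rightarrow> 'm \<Rightarrow> ('m \<times> 'm) set" where
  "factor_pairs C \<sigma> \<tau> f = {(a, b). a \<in> \<sigma> \<and> b \<in> \<tau> \<and> Dom C a = Cod C b \<and> Comp C a b = f}"

definition quasi_schemoid :: "('o, 'm) cat \<Rightarrow> 'm set set \<Rightarrow> bool" where
  "quasi_schemoid C S \<longleftrightarrow> category C \<and>
     (\<forall>\<sigma>\<in>S. \<sigma> \<noteq> {}) \<and> \<Union>S = Mor C \<and>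
     (\<forall>\<sigma>\<in>S. \<forall>\<tau>\<in>S. \<sigma> \<noteq> \<tau> \<longrightarrow> \<sigma> \<inter> \<tau> = {}) \<and>
     (\<forall>\<sigma>\<in>S. \<forall>\<tau>\<in>S. \<forall>\<mu>\<in>S. \<forall>f\<in>\<mu>. \<forall>g\<in>\<mu>.
        factor_pairs C \<sigma> \<tau> f \<approx> factor_pairs C \<sigma> \<tau> g)"

definition finite_qs :: "('o, 'm) cat \<Rightarrow> 'm set set \<Rightarrow> bool" where
  "finite_qs C S \<longleftrightarrow> quasi_schemoid C S \<and> finite (Mor C)"

definition unital :: "('o, 'm) cat \<Rightarrow> 'm set set \<Rightarrow> bool" where
  "unital C S \<longleftrightarrow> quasi_schemoid C S \<and>
     (\<forall>\<sigma>\<in>S. \<sigma> \<inter> Id C ` Obj C \<noteq> {} \<longrightarrow> \<sigma> \<subseteq> Id C ` Obj C)"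

definition basic :: "('o, 'm) cat \<Rightarrow> 'm set set \<Rightarrow> bool" where
  "basic C S \<longleftrightarrow> unital C S \<and> groupoid C"

definition finite_basic :: "('o, 'm) cat \<Rightarrow> 'm set set \<Rightarrow> bool" where
  "finite_basic C S \<longleftrightarrow> finite_qs C S \<and> basic C S"

definition is_functor :: "('o1, 'm1) cat \<Rightarrow> ('o2, 'm2) cat \<Rightarrow> ('o1 \<Rightarrow> 'o2) \<Rightarrow> ('m1 \<Rightarrow> 'm2) \<Rightarrow> bool" where
  "is_functor C D Fo Fm \<longleftrightarrow> category C \<and> category D \<and>
     (\<forall>x\<in>Obj C. Fo x \<in> Obj D) \<and>
     (\<forall>f\<in>Mor C. Fm f \<in> Mor D \<and> Dom D (Fm f) = Fo (Dom C f) \<and> Cod D (Fm f) = Fo (Cod C f)) \<and>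
     (\<forall>x\<in>Obj C. Fm (Id C x) = Id D (Fo x)) \<and>
     (\<forall>f\<in>Mor C. \<forall>g\<in>Mor C. Dom C g = Cod C f \<longrightarrow> Fm (Comp C g f) = Comp D (Fm g) (Fm f))"

definition qs_morphism ::
  "('o1, 'm1) cat \<Rightarrow> 'm1 set set \<Rightarrow> ('o2, 'm2) cat \<Rightarrow> 'm2 set set \<Rightarrow> ('o1 \<Rightarrow> 'o2) \<Rightarrow> ('m1 \<Rightarrow> 'm2) \<Rightarrow> bool" where
  "qs_morphism C S D T Fo Fm \<longleftrightarrow> quasi_schemoid C S \<and> quasi_schemoid D T \<and> is_functor C D Fo Fm \<and>
     (\<forall>\<sigma>\<in>S. \<exists>!\<tau>. \<tau> \<in> T \<and> Fm ` \<sigma> \<subseteq> \<tau>)"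

definition blk :: "'m2 set set \<Rightarrow> ('m1 \<Rightarrow> 'm2) \<Rightarrow> 'm1 set \<Rightarrow> 'm2 set" where
  "blk T Fm \<sigma> = (THE \<tau>. \<tau> \<in> T \<and> Fm ` \<sigma> \<subseteq> \<tau>)"

definition admissible ::
  "('o1, 'm1) cat \<Rightarrow> 'm1 set set \<Rightarrow> ('o2, 'm2) cat \<Rightarrow> 'm2 set set \<Rightarrow> ('o1 \<Rightarrow> 'o2) \<Rightarrow> ('m1 \<Rightarrow> 'm2) \<Rightarrow> bool" where
  "admissible C S D T Fo Fm \<longleftrightarrow> qs_morphism C S D T Fo Fm \<and>
     (\<forall>x\<in>Obj C. \<forall>\<sigma>\<in>S. \<forall>g\<in>blk T Fm \<sigma>. Cod D g = Fo x \<longrightarrow>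
        (\<exists>f\<in>\<sigma>. Cod C f = x \<and> Fm f = g))"

definition nphi ::
  "('o1, 'm1) cat \<Rightarrow> ('o2, 'm2) cat \<Rightarrow> 'm2 set set \<Rightarrow> ('o1 \<Rightarrow> 'o2) \<Rightarrow> ('m1 \<Rightarrow> 'm2) \<Rightarrow> 'm1 set \<Rightarrow> nat" where
  "nphi C D T Fo Fm \<sigma> = (SOME n. n > 0 \<and>
     (\<forall>x\<in>Obj C. \<forall>g\<in>blk T Fm \<sigma>. Cod D g = Fo x \<longrightarrow>
        card {f \<in> \<sigma>. Cod C f = x \<and> Fm f = g} = n))"

text \<open>Elements of the category algebra of a finite category are functions Mor C to K
(vanishing outside Mor C); the product is the convolution a . b = sum of a(f) b(g) (f o g).\<close>
definition cat_mult :: "('o, 'm) cat \<Rightarrow> ('m \<Rightarrow> 'k::comm_ring_1) \<Rightarrow> ('m \<Rightarrow> 'k) \<Rightarrow> ('m \<Rightarrow> 'k)" where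
  "cat_mult C a b = (\<lambda>h. \<Sum>(f, g) \<in> {(f, g). f \<in> Mor C \<and> g \<in> Mor C \<and> Dom C f = Cod C g \<and> Comp C f g = h}.
      a f * b g)"

text \<open>s_sigma = sum of the morphisms in sigma.\<close>
definition sblock :: "'m set \<Rightarrow> ('m \<Rightarrow> 'k::comm_ring_1)" where
  "sblock \<sigma> = (\<lambda>h. if h \<in> \<sigma> then 1 else 0)"

definition sch_alg :: "('o, 'm) cat \<Rightarrow> 'm set set \<Rightarrow> ('m \<Rightarrow> 'k::comm_ring_1) set" where
  "sch_alg C S = {a. \<exists>c :: 'm set \<Rightarrow> 'k. a = (\<lambda>h. \<Sum>\<sigma>\<in>S. c \<sigma> * sblock \<sigma> h)}"

text \<open>K(phi): the K-linear map on the schemoid algebra with s_pi |-> n^phi_pi s_phi(pi).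
The coefficient of s_sigma in a is the value of a at any morphism of sigma.\<close>
definition Kmap ::
  "('o1, 'm1) cat \<Rightarrow> 'm1 set set \<Rightarrow> ('o2, 'm2) cat \<Rightarrow> 'm2 set set \<Rightarrow> ('o1 \<Rightarrow> 'o2) \<Rightarrow> ('m1 \<Rightarrow> 'm2)
     \<Rightarrow> ('m1 \<Rightarrow> 'k::comm_ring_1) \<Rightarrow> ('m2 \<Rightarrow> 'k)" where
  "Kmap C S D T Fo Fm a = (\<lambda>g. \<Sum>\<sigma>\<in>S.
      if g \<in> blk T Fm \<sigma> then of_nat (nphi C D T Fo Fm \<sigma>) * a (SOME f. f \<in> \<sigma>) else 0)"

end

theory Submission
  imports Defs
begin

text \<open>
  The schemoid algebra consists of the functions on morphisms that vanish outside the category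
  and are constant on blocks; for such a function a, the value of K(\<phi>)(a) at a morphism g with
  t(g) = \<phi>(x) is the sum of a over the fibre {f. t(f) = x, \<phi>(f) = g}. This description needs
  n^\<phi>_\<sigma> to be well defined: in a groupoid, f \<mapsto> (f, f^-1 \<circ> f0) identifies the fibre of \<phi>
  through f0 inside the block \<sigma> with the factorisations of f0 through \<sigma> and the blocks that \<phi> maps
  to identities (by unitality of the target, these are whole blocks), and by the quasi-schemoid
  axiom their number depends only on \<sigma>. Multiplicativity is then a regrouping of the convolution
  sum along \<phi>; away from the image of \<phi> both sides vanish, since in a basic quasi-schemoid the
  identities at the codomains of two morphisms of one block lie in a common block.
  Functoriality reduces to n^(\<psi>\<phi>)_\<sigma> = n^\<phi>_\<sigma> * n^\<psi>_\<phi>(\<sigma>), obtained by splitting the fibres of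
  \<psi> \<circ> \<phi> along \<phi>.
\<close>

lemma category_facts:
  assumes "category C"
  shows cat_dom: "f \<in> Mor C \<Longrightarrow> Dom C f \<in> Obj C"
    and cat_cod: "f \<in> Mor C \<Longrightarrow> Cod C f \<in> Obj C"
    and cat_id: "x \<in> Obj C \<Longrightarrow> Id C x \<in> Mor C"
    and cat_id_dom: "x \<in> Obj C \<Longrightarrow> Dom C (Id C x) = x"
    and cat_id_cod: "x \<in> Obj C \<Longrightarrow> Cod C (Id C x) = x"
    and cat_comp: "f \<in> Mor C \<Longrightarrow> g \<in> Mor C \<Longrightarrow> Dom C g = Cod C f \<Longrightarrow> Comp C g f \<in> Mor C"
    and cat_comp_cod: "f \<in> Mor C \<Longrightarrow> g \<in> Mor C \<Longrightarrow> Dom C g = Cod C f \<Longrightarrow> Cod C (Comp C g f) = Cod C g"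
    and cat_id_left: "f \<in> Mor C \<Longrightarrow> Comp C (Id C (Cod C f)) f = f"
    and cat_id_right: "f \<in> Mor C \<Longrightarrow> Comp C f (Id C (Dom C f)) = f"
    and cat_assoc: "f \<in> Mor C \<Longrightarrow> g \<in> Mor C \<Longrightarrow> h \<in> Mor C \<Longrightarrow> Dom C h = Cod C g \<Longrightarrow> Dom C g = Cod C f \<Longrightarrow>
        Comp C h (Comp C g f) = Comp C (Comp C h g) f"
  using assms unfolding category_def by simp_all

lemma groupoid_inverse:
  assumes "groupoid C" "f \<in> Mor C"
  obtains g where "g \<in> Mor C" "Dom C g = Cod C f" "Cod C g = Dom C f"
    "Comp C g f = Id C (Dom C f)" "Comp C f g = Id C (Cod C f)"
  using assms unfolding groupoid_def by blast

lemma functor_facts: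
  assumes "is_functor C D Fo Fm"
  shows functor_obj: "x \<in> Obj C \<Longrightarrow> Fo x \<in> Obj D"
    and functor_mor: "f \<in> Mor C \<Longrightarrow> Fm f \<in> Mor D"
    and functor_dom: "f \<in> Mor C \<Longrightarrow> Dom D (Fm f) = Fo (Dom C f)"
    and functor_cod: "f \<in> Mor C \<Longrightarrow> Cod D (Fm f) = Fo (Cod C f)"
    and functor_Id: "x \<in> Obj C \<Longrightarrow> Fm (Id C x) = Id D (Fo x)"
    and functor_comp: "f \<in> Mor C \<Longrightarrow> g \<in> Mor C \<Longrightarrow> Dom C g = Cod C f \<Longrightarrow>
        Fm (Comp C g f) = Comp D (Fm g) (Fm f)"
    and functor_source: "category C" and functor_target: "category D"
  using assms unfolding is_functor_def by blast+

lemma functor_comp_functor: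
  "is_functor C1 C2 Fo Fm \<Longrightarrow> is_functor C2 C3 Go Gm \<Longrightarrow> is_functor C1 C3 (Go \<circ> Fo) (Gm \<circ> Fm)"
  unfolding is_functor_def by auto

lemma quasi_schemoid_facts:
  assumes "quasi_schemoid C S"
  shows qs_category: "category C"
    and qs_block_nonempty: "\<sigma> \<in> S \<Longrightarrow> \<sigma> \<noteq> {}"
    and qs_Union_blocks: "\<Union>S = Mor C"
    and qs_block_unique: "\<sigma> \<in> S \<Longrightarrow> \<tau> \<in> S \<Longrightarrow> f \<in> \<sigma> \<Longrightarrow> f \<in> \<tau> \<Longrightarrow> \<sigma> = \<tau>"
    and qs_factor_pairs_eqpoll: "\<sigma> \<in> S \<Longrightarrow> \<tau> \<in> S \<Longrightarrow> \<mu> \<in> S \<Longrightarrow> f \<in> \<mu> \<Longrightarrow> g \<in> \<mu> \<Longrightarrow>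
        factor_pairs C \<sigma> \<tau> f \<approx> factor_pairs C \<sigma> \<tau> g"
proof -
  note qs = assms[unfolded quasi_schemoid_def]
  show "category C" "\<Union>S = Mor C" using qs by simp_all
  show "\<sigma> \<in> S \<Longrightarrow> \<sigma> \<noteq> {}" using qs by simp
  show "\<sigma> \<in> S \<Longrightarrow> \<tau> \<in> S \<Longrightarrow> f \<in> \<sigma> \<Longrightarrow> f \<in> \<tau> \<Longrightarrow> \<sigma> = \<tau>" using qs by blast
  show "\<sigma> \<in> S \<Longrightarrow> \<tau> \<in> S \<Longrightarrow> \<mu> \<in> S \<Longrightarrow> f \<in> \<mu> \<Longrightarrow> g \<in> \<mu> \<Longrightarrow>
      factor_pairs C \<sigma> \<tau> f \<approx> factor_pairs C \<sigma> \<tau> g" using qs by simp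
qed

lemma qs_block_subset: "quasi_schemoid C S \<Longrightarrow> \<sigma> \<in> S \<Longrightarrow> \<sigma> \<subseteq> Mor C"
  using qs_Union_blocks by blast

lemma qs_block_exists: "quasi_schemoid C S \<Longrightarrow> f \<in> Mor C \<Longrightarrow> \<exists>\<sigma>\<in>S. f \<in> \<sigma>"
  using qs_Union_blocks by blast

lemma qs_finite_blocks: "quasi_schemoid C S \<Longrightarrow> finite (Mor C) \<Longrightarrow> finite S"
  using qs_Union_blocks by (metis finite_UnionD)

lemma qs_some_in_block: "quasi_schemoid C S \<Longrightarrow> \<sigma> \<in> S \<Longrightarrow> (SOME f. f \<in> \<sigma>) \<in> \<sigma>"
  using qs_block_nonempty by (metis ex_in_conv someI_ex)

lemma finite_qsD:
  assumes "finite_qs C S"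
  shows "quasi_schemoid C S" "finite (Mor C)" "finite S"
  using assms unfolding finite_qs_def by (auto intro: qs_finite_blocks)

lemma finite_basicD:
  assumes "finite_basic C S"
  shows "quasi_schemoid C S" "finite (Mor C)" "groupoid C" "unital C S"
  using assms unfolding finite_basic_def finite_qs_def basic_def unital_def by blast+

lemma finite_qsI: "finite_basic C S \<Longrightarrow> finite_qs C S"
  unfolding finite_basic_def by blast

lemma unital_block_of_Id:
  "unital C S \<Longrightarrow> \<sigma> \<in> S \<Longrightarrow> f \<in> \<sigma> \<Longrightarrow> f \<in> Id C ` Obj C \<Longrightarrow> \<sigma> \<subseteq> Id C ` Obj C"
  unfolding unital_def by blast

lemma qs_morphismD:
  assumes "qs_morphism C S D T Fo Fm"
  shows "quasi_schemoid C S" "quasi_schemoid D T" "is_functor C D Fo Fm"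
  using assms unfolding qs_morphism_def by blast+

lemma qs_morphismI:
  assumes "quasi_schemoid C S" "quasi_schemoid D T" "is_functor C D Fo Fm"
    and "\<And>\<sigma>. \<sigma> \<in> S \<Longrightarrow> \<exists>\<tau>\<in>T. Fm ` \<sigma> \<subseteq> \<tau>"
  shows "qs_morphism C S D T Fo Fm"
  unfolding qs_morphism_def
proof (intro conjI assms ballI)
  fix \<sigma> assume "\<sigma> \<in> S"
  then obtain \<tau> f where "\<tau> \<in> T" "Fm ` \<sigma> \<subseteq> \<tau>" "f \<in> \<sigma>"
    using assms(4) qs_block_nonempty[OF assms(1)] by blast
  then show "\<exists>!\<tau>. \<tau> \<in> T \<and> Fm ` \<sigma> \<subseteq> \<tau>"
    using qs_block_unique[OF assms(2)] by blast
qed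

lemma blk_facts:
  assumes "qs_morphism C S D T Fo Fm" "\<sigma> \<in> S"
  shows blk_in: "blk T Fm \<sigma> \<in> T"
    and blk_image: "f \<in> \<sigma> \<Longrightarrow> Fm f \<in> blk T Fm \<sigma>"
proof -
  have "\<exists>!\<tau>. \<tau> \<in> T \<and> Fm ` \<sigma> \<subseteq> \<tau>"
    using assms unfolding qs_morphism_def by blast
  from theI'[OF this] show "blk T Fm \<sigma> \<in> T" "f \<in> \<sigma> \<Longrightarrow> Fm f \<in> blk T Fm \<sigma>"
    unfolding blk_def by blast+
qed

lemma blk_eqI:
  assumes "qs_morphism C S D T Fo Fm" "\<sigma> \<in> S" "\<tau> \<in> T" "f \<in> \<sigma>" "Fm f \<in> \<tau>"
  shows "blk T Fm \<sigma> = \<tau>"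
  using assms qs_block_unique[OF qs_morphismD(2)] blk_facts by metis

lemma admissibleD:
  assumes "admissible C S D T Fo Fm"
  shows admissible_qs_morphism: "qs_morphism C S D T Fo Fm"
    and admissible_lift: "x \<in> Obj C \<Longrightarrow> \<sigma> \<in> S \<Longrightarrow> g \<in> blk T Fm \<sigma> \<Longrightarrow> Cod D g = Fo x \<Longrightarrow>
      \<exists>f\<in>\<sigma>. Cod C f = x \<and> Fm f = g"
  using assms unfolding admissible_def by blast+

section \<open>The category of admissible morphisms\<close>

lemma qs_morphism_comp:
  assumes F: "qs_morphism C1 S1 C2 S2 Fo Fm" and G: "qs_morphism C2 S2 C3 S3 Go Gm"
  shows "qs_morphism C1 S1 C3 S3 (Go \<circ> Fo) (Gm \<circ> Fm)"
    and blk_comp: "\<sigma> \<in> S1 \<Longrightarrow> blk S3 (Gm \<circ> Fm) \<sigma> = blk S3 Gm (blk S2 Fm \<sigma>)"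
proof -
  have image: "(Gm \<circ> Fm) ` \<sigma> \<subseteq> blk S3 Gm (blk S2 Fm \<sigma>)" if "\<sigma> \<in> S1" for \<sigma>
    using blk_image[OF G blk_in[OF F that]] blk_image[OF F that] by auto
  show GF: "qs_morphism C1 S1 C3 S3 (Go \<circ> Fo) (Gm \<circ> Fm)"
    using qs_morphismD[OF F] qs_morphismD[OF G] blk_in[OF G blk_in[OF F]] image
    by (intro qs_morphismI functor_comp_functor) blast+
  assume "\<sigma> \<in> S1"
  moreover obtain f where "f \<in> \<sigma>"
    using qs_block_nonempty[OF qs_morphismD(1)[OF F] \<open>\<sigma> \<in> S1\<close>] by blast
  ultimately show "blk S3 (Gm \<circ> Fm) \<sigma> = blk S3 Gm (blk S2 Fm \<sigma>)"
    using blk_eqI[OF GF] blk_in[OF G blk_in[OF F]] image by blast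
qed

lemma admissible_comp:
  assumes F: "admissible C1 S1 C2 S2 Fo Fm" and G: "admissible C2 S2 C3 S3 Go Gm"
  shows "admissible C1 S1 C3 S3 (Go \<circ> Fo) (Gm \<circ> Fm)"
  unfolding admissible_def
proof (intro conjI ballI impI)
  note FQ = admissible_qs_morphism[OF F] and GQ = admissible_qs_morphism[OF G]
  show "qs_morphism C1 S1 C3 S3 (Go \<circ> Fo) (Gm \<circ> Fm)"
    using qs_morphism_comp(1)[OF FQ GQ] .
  fix x \<sigma> g assume x: "x \<in> Obj C1" and \<sigma>: "\<sigma> \<in> S1" and g: "g \<in> blk S3 (Gm \<circ> Fm) \<sigma>"
    and "Cod C3 g = (Go \<circ> Fo) x"
  then obtain f' where f': "f' \<in> blk S2 Fm \<sigma>" "Cod C2 f' = Fo x" "Gm f' = g"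
    using admissible_lift[OF G functor_obj[OF qs_morphismD(3)[OF FQ] x] blk_in[OF FQ \<sigma>]]
      blk_comp[OF FQ GQ \<sigma>] by auto
  then obtain f where "f \<in> \<sigma>" "Cod C1 f = x" "Fm f = f'"
    using admissible_lift[OF F x \<sigma>] by blast
  with f' show "\<exists>f\<in>\<sigma>. Cod C1 f = x \<and> (Gm \<circ> Fm) f = g" by auto
qed

lemma qs_morphism_id:
  assumes "quasi_schemoid C S"
  shows "qs_morphism C S C S id id" and blk_id: "\<sigma> \<in> S \<Longrightarrow> blk S id \<sigma> = \<sigma>"
proof -
  have "is_functor C C id id"
    using qs_category[OF assms] unfolding is_functor_def category_def by auto
  then show I: "qs_morphism C S C S id id"
    using assms by (intro qs_morphismI) auto
  assume "\<sigma> \<in> S"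
  moreover obtain f where "f \<in> \<sigma>" using qs_block_nonempty[OF assms \<open>\<sigma> \<in> S\<close>] by blast
  ultimately show "blk S id \<sigma> = \<sigma>" using blk_eqI[OF I] by simp
qed

lemma admissible_id: "quasi_schemoid C S \<Longrightarrow> admissible C S C S id id"
  unfolding admissible_def using qs_morphism_id blk_id by fastforce

section \<open>The schemoid algebra\<close>

definition block_const :: "('o, 'm) cat \<Rightarrow> 'm set set \<Rightarrow> ('m \<Rightarrow> 'k::zero) \<Rightarrow> bool" where
  "block_const C S a \<longleftrightarrow> (\<forall>h. h \<notin> Mor C \<longrightarrow> a h = 0) \<and> (\<forall>\<sigma>\<in>S. \<forall>f\<in>\<sigma>. \<forall>g\<in>\<sigma>. a f = a g)"

lemma block_constD:
  assumes "block_const C S a"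
  shows block_const_outside: "h \<notin> Mor C \<Longrightarrow> a h = 0"
    and block_const_eq: "\<sigma> \<in> S \<Longrightarrow> f \<in> \<sigma> \<Longrightarrow> g \<in> \<sigma> \<Longrightarrow> a f = a g"
  using assms unfolding block_const_def by blast+

lemma block_const_rep:
  "block_const C S a \<Longrightarrow> quasi_schemoid C S \<Longrightarrow> \<sigma> \<in> S \<Longrightarrow> f \<in> \<sigma> \<Longrightarrow> a f = a (SOME f. f \<in> \<sigma>)"
  by (rule block_const_eq) (auto intro: qs_some_in_block)

lemma sum_sblock_in_block:
  assumes "quasi_schemoid C S" "finite S" "\<sigma>\<^sub>0 \<in> S" "h \<in> \<sigma>\<^sub>0"
  shows "(\<Sum>\<sigma>\<in>S. c \<sigma> * sblock \<sigma> h) = (c \<sigma>\<^sub>0 :: 'k::comm_ring_1)"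
proof -
  have "(\<Sum>\<sigma>\<in>S. c \<sigma> * sblock \<sigma> h) = (\<Sum>\<sigma>\<in>S. if \<sigma> = \<sigma>\<^sub>0 then c \<sigma> else 0)"
  proof (rule sum.cong[OF refl])
    fix \<sigma> assume "\<sigma> \<in> S"
    then have "h \<in> \<sigma> \<longleftrightarrow> \<sigma> = \<sigma>\<^sub>0"
      using qs_block_unique[OF assms(1) _ assms(3)] assms(4) by blast
    then show "c \<sigma> * sblock \<sigma> h = (if \<sigma> = \<sigma>\<^sub>0 then c \<sigma> else 0)"
      by (simp add: sblock_def)
  qed
  also have "\<dots> = c \<sigma>\<^sub>0" using assms(2,3) by simp
  finally show ?thesis .
qed

lemma sum_sblock_outside:
  assumes "quasi_schemoid C S" "h \<notin> Mor C"
  shows "(\<Sum>\<sigma>\<in>S. c \<sigma> * sblock \<sigma> h) = (0 :: 'k::comm_ring_1)"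
  using qs_block_subset[OF assms(1)] assms(2) by (intro sum.neutral) (auto simp: sblock_def)

lemma block_const_expansion:
  assumes Q: "quasi_schemoid C S" and fin: "finite S" and a: "block_const C S a"
  shows "a h = (\<Sum>\<sigma>\<in>S. a (SOME f. f \<in> \<sigma>) * sblock \<sigma> h)"
proof (cases "h \<in> Mor C")
  case True
  then obtain \<sigma> where \<sigma>: "\<sigma> \<in> S" "h \<in> \<sigma>" using qs_block_exists[OF Q] by blast
  show ?thesis
    using sum_sblock_in_block[OF Q fin \<sigma>, of "\<lambda>\<sigma>. a (SOME f. f \<in> \<sigma>)"] block_const_rep[OF a Q \<sigma>]
    by simp
next
  case False
  then show ?thesis using sum_sblock_outside[OF Q] block_const_outside[OF a] by simp
qed

lemma sch_alg_iff_block_const: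
  assumes Q: "quasi_schemoid C S" and fin: "finite S"
  shows "a \<in> sch_alg C S \<longleftrightarrow> block_const C S a"
proof
  assume "a \<in> sch_alg C S"
  then obtain c where a: "a = (\<lambda>h. \<Sum>\<sigma>\<in>S. c \<sigma> * sblock \<sigma> h)"
    unfolding sch_alg_def by blast
  show "block_const C S a"
    unfolding block_const_def
  proof (intro conjI allI impI ballI)
    show "a h = 0" if "h \<notin> Mor C" for h
      unfolding a using sum_sblock_outside[OF Q that] .
    show "a f = a g" if "\<sigma> \<in> S" "f \<in> \<sigma>" "g \<in> \<sigma>" for \<sigma> f g
      unfolding a
      by (simp only: sum_sblock_in_block[OF Q fin that(1,2)] sum_sblock_in_block[OF Q fin that(1,3)])
  qed
next
  assume "block_const C S a"
  then have "a = (\<lambda>h. \<Sum>\<sigma>\<in>S. a (SOME f. f \<in> \<sigma>) * sblock \<sigma> h)"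
    using block_const_expansion[OF Q fin] by blast
  then show "a \<in> sch_alg C S" unfolding sch_alg_def by (intro CollectI exI)
qed

lemma finite_basic_sch_alg_iff: "finite_basic C S \<Longrightarrow> a \<in> sch_alg C S \<longleftrightarrow> block_const C S a"
  using sch_alg_iff_block_const finite_qsD finite_qsI by metis

lemma sch_alg_zero: "(\<lambda>h. 0) \<in> sch_alg C S"
  unfolding sch_alg_def by (rule CollectI, rule exI[of _ "\<lambda>_. 0"]) simp

lemma sch_alg_add:
  assumes "a \<in> sch_alg C S" "b \<in> sch_alg C S"
  shows "(\<lambda>h. a h + b h) \<in> sch_alg C S"
proof -
  obtain c d where "a = (\<lambda>h. \<Sum>\<sigma>\<in>S. c \<sigma> * sblock \<sigma> h)" "b = (\<lambda>h. \<Sum>\<sigma>\<in>S. d \<sigma> * sblock \<sigma> h)"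
    using assms unfolding sch_alg_def by blast
  then have "(\<lambda>h. a h + b h) = (\<lambda>h. \<Sum>\<sigma>\<in>S. (c \<sigma> + d \<sigma>) * sblock \<sigma> h)"
    by (simp add: sum.distrib distrib_right)
  then show ?thesis unfolding sch_alg_def by (intro CollectI exI)
qed

lemma sch_alg_scale:
  assumes "a \<in> sch_alg C S"
  shows "(\<lambda>h. k * a h) \<in> sch_alg C S"
proof -
  obtain c where "a = (\<lambda>h. \<Sum>\<sigma>\<in>S. c \<sigma> * sblock \<sigma> h)"
    using assms unfolding sch_alg_def by blast
  then have "(\<lambda>h. k * a h) = (\<lambda>h. \<Sum>\<sigma>\<in>S. (k * c \<sigma>) * sblock \<sigma> h)"
    by (simp add: sum_distrib_left mult.assoc)
  then show ?thesis unfolding sch_alg_def by (intro CollectI exI)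
qed

lemma cat_mult_factor_pairs:
  "cat_mult C a b h = (\<Sum>(f, g)\<in>factor_pairs C (Mor C) (Mor C) h. a f * b g)"
  unfolding cat_mult_def factor_pairs_def by simp

lemma cat_mult_outside: "category C \<Longrightarrow> h \<notin> Mor C \<Longrightarrow> cat_mult C a b h = 0"
  unfolding cat_mult_def using cat_comp by (intro sum.neutral) fastforce

lemma factor_pairs_finite:
  "quasi_schemoid C S \<Longrightarrow> finite (Mor C) \<Longrightarrow> \<sigma> \<in> S \<Longrightarrow> \<tau> \<in> S \<Longrightarrow> finite (factor_pairs C \<sigma> \<tau> f)"
  by (rule finite_subset[of _ "Mor C \<times> Mor C"]) (auto simp: factor_pairs_def dest: qs_block_subset)

lemma factor_pairs_card_eq:
  assumes "quasi_schemoid C S" "finite (Mor C)" "\<sigma> \<in> S" "\<tau> \<in> S" "\<mu> \<in> S" "f \<in> \<mu>" "g \<in> \<mu>"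
  shows "card (factor_pairs C \<sigma> \<tau> f) = card (factor_pairs C \<sigma> \<tau> g)"
  using qs_factor_pairs_eqpoll[OF assms(1,3-7)] factor_pairs_finite[OF assms(1-4)]
  by (simp add: eqpoll_iff_card)

lemma sum_factor_pairs_Union:
  assumes Q: "quasi_schemoid C S" and fin: "finite (Mor C)" and A: "A \<subseteq> S" and B: "B \<subseteq> S"
  shows "sum F (factor_pairs C (\<Union>A) (\<Union>B) h) = (\<Sum>\<sigma>\<in>A. \<Sum>\<tau>\<in>B. sum F (factor_pairs C \<sigma> \<tau> h))"
proof -
  have finA: "finite A" and finB: "finite B"
    using A B qs_finite_blocks[OF Q fin] finite_subset by blast+
  have finP: "finite (factor_pairs C \<sigma> \<tau> h)" if "\<sigma> \<in> A" "\<tau> \<in> B" for \<sigma> \<tau>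
    using factor_pairs_finite[OF Q fin] that A B by blast
  have disj: "X \<inter> Y = {}" if "X \<subseteq> \<sigma> \<times> UNIV" "Y \<subseteq> \<sigma>' \<times> UNIV" "\<sigma> \<in> S" "\<sigma>' \<in> S" "\<sigma> \<noteq> \<sigma>'"
    for X Y \<sigma> \<sigma>'
    using that qs_block_unique[OF Q that(3,4)] by blast
  have "factor_pairs C (\<Union>A) (\<Union>B) h = (\<Union>\<sigma>\<in>A. \<Union>\<tau>\<in>B. factor_pairs C \<sigma> \<tau> h)"
    unfolding factor_pairs_def by blast
  also have "sum F \<dots> = (\<Sum>\<sigma>\<in>A. sum F (\<Union>\<tau>\<in>B. factor_pairs C \<sigma> \<tau> h))"
  proof (rule sum.UNION_disjoint[OF finA])
    show "\<forall>\<sigma>\<in>A. finite (\<Union>\<tau>\<in>B. factor_pairs C \<sigma> \<tau> h)" using finB finP by blast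
    show "\<forall>\<sigma>\<in>A. \<forall>\<sigma>'\<in>A. \<sigma> \<noteq> \<sigma>' \<longrightarrow>
        (\<Union>\<tau>\<in>B. factor_pairs C \<sigma> \<tau> h) \<inter> (\<Union>\<tau>\<in>B. factor_pairs C \<sigma>' \<tau> h) = {}"
      using A by (intro ballI impI disj) (auto simp: factor_pairs_def)
  qed
  also have "\<dots> = (\<Sum>\<sigma>\<in>A. \<Sum>\<tau>\<in>B. sum F (factor_pairs C \<sigma> \<tau> h))"
  proof (intro sum.cong refl sum.UNION_disjoint[OF finB])
    fix \<sigma> assume "\<sigma> \<in> A"
    then show "\<forall>\<tau>\<in>B. finite (factor_pairs C \<sigma> \<tau> h)" using finP by blast
    show "\<forall>\<tau>\<in>B. \<forall>\<tau>'\<in>B. \<tau> \<noteq> \<tau>' \<longrightarrow> factor_pairs C \<sigma> \<tau> h \<inter> factor_pairs C \<sigma> \<tau>' h = {}"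
      using B qs_block_unique[OF Q] unfolding factor_pairs_def by blast
  qed
  finally show ?thesis .
qed

lemma card_factor_pairs_Union:
  "quasi_schemoid C S \<Longrightarrow> finite (Mor C) \<Longrightarrow> A \<subseteq> S \<Longrightarrow> B \<subseteq> S \<Longrightarrow>
    card (factor_pairs C (\<Union>A) (\<Union>B) h) = (\<Sum>\<sigma>\<in>A. \<Sum>\<tau>\<in>B. card (factor_pairs C \<sigma> \<tau> h))"
  unfolding card_eq_sum by (rule sum_factor_pairs_Union)

lemma sum_over_blocks:
  assumes Q: "quasi_schemoid C S" and fin: "finite (Mor C)" and A: "A \<subseteq> Mor C"
  shows "sum F A = (\<Sum>\<sigma>\<in>S. sum F (A \<inter> \<sigma>))"
proof -
  have "A = (\<Union>\<sigma>\<in>S. A \<inter> \<sigma>)" using A qs_Union_blocks[OF Q] by blast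
  then have "sum F A = sum F (\<Union>\<sigma>\<in>S. A \<inter> \<sigma>)" by (rule arg_cong)
  also have "\<dots> = (\<Sum>\<sigma>\<in>S. sum F (A \<inter> \<sigma>))"
  proof (rule sum.UNION_disjoint)
    show "finite S" using qs_finite_blocks[OF Q fin] .
    show "\<forall>\<sigma>\<in>S. finite (A \<inter> \<sigma>)" using A fin by (blast intro: finite_subset)
    show "\<forall>\<sigma>\<in>S. \<forall>\<tau>\<in>S. \<sigma> \<noteq> \<tau> \<longrightarrow> A \<inter> \<sigma> \<inter> (A \<inter> \<tau>) = {}"
      using qs_block_unique[OF Q] by blast
  qed
  finally show ?thesis .
qed

lemma cat_mult_block_expansion:
  assumes Q: "quasi_schemoid C S" and fin: "finite (Mor C)"
    and a: "block_const C S a" and b: "block_const C S b"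
  shows "cat_mult C a b h = (\<Sum>\<sigma>\<in>S. \<Sum>\<tau>\<in>S.
      of_nat (card (factor_pairs C \<sigma> \<tau> h)) * (a (SOME f. f \<in> \<sigma>) * b (SOME f. f \<in> \<tau>)))"
proof -
  have "cat_mult C a b h = (\<Sum>\<sigma>\<in>S. \<Sum>\<tau>\<in>S. \<Sum>(f, g)\<in>factor_pairs C \<sigma> \<tau> h. a f * b g)"
    unfolding cat_mult_factor_pairs qs_Union_blocks[OF Q, symmetric]
    by (rule sum_factor_pairs_Union[OF Q fin]) auto
  also have "\<dots> = (\<Sum>\<sigma>\<in>S. \<Sum>\<tau>\<in>S.
      of_nat (card (factor_pairs C \<sigma> \<tau> h)) * (a (SOME f. f \<in> \<sigma>) * b (SOME f. f \<in> \<tau>)))"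
  proof (intro sum.cong refl)
    fix \<sigma> \<tau> assume \<sigma>: "\<sigma> \<in> S" and \<tau>: "\<tau> \<in> S"
    have "(\<Sum>(f, g)\<in>factor_pairs C \<sigma> \<tau> h. a f * b g)
        = (\<Sum>_\<in>factor_pairs C \<sigma> \<tau> h. a (SOME f. f \<in> \<sigma>) * b (SOME f. f \<in> \<tau>))"
    proof (rule sum.cong[OF refl])
      fix p assume "p \<in> factor_pairs C \<sigma> \<tau> h"
      then obtain f g where "p = (f, g)" "f \<in> \<sigma>" "g \<in> \<tau>" unfolding factor_pairs_def by blast
      then show "(\<lambda>(f, g). a f * b g) p = a (SOME f. f \<in> \<sigma>) * b (SOME f. f \<in> \<tau>)"
        using block_const_rep[OF a Q \<sigma>] block_const_rep[OF b Q \<tau>] by simp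
    qed
    then show "(\<Sum>(f, g)\<in>factor_pairs C \<sigma> \<tau> h. a f * b g)
        = of_nat (card (factor_pairs C \<sigma> \<tau> h)) * (a (SOME f. f \<in> \<sigma>) * b (SOME f. f \<in> \<tau>))"
      by simp
  qed
  finally show ?thesis .
qed

lemma block_const_cat_mult:
  assumes "finite_qs C S" and a: "block_const C S a" and b: "block_const C S b"
  shows "block_const C S (cat_mult C a b)"
  unfolding block_const_def
proof (intro conjI allI impI ballI)
  note Q = finite_qsD(1)[OF assms(1)] and fin = finite_qsD(2)[OF assms(1)]
  show "cat_mult C a b h = 0" if "h \<notin> Mor C" for h
    using cat_mult_outside[OF qs_category[OF Q] that] .
  show "cat_mult C a b f = cat_mult C a b g" if "\<mu> \<in> S" "f \<in> \<mu>" "g \<in> \<mu>" for \<mu> f g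
    unfolding cat_mult_block_expansion[OF Q fin a b]
    using factor_pairs_card_eq[OF Q fin _ _ that] by simp
qed

lemma sch_alg_cat_mult:
  "finite_qs C S \<Longrightarrow> a \<in> sch_alg C S \<Longrightarrow> b \<in> sch_alg C S \<Longrightarrow> cat_mult C a b \<in> sch_alg C S"
  using block_const_cat_mult[of C S a b] sch_alg_iff_block_const[OF finite_qsD(1,3)] by blast

lemma Kmap_sblock:
  assumes F: "qs_morphism C S D T Fo Fm" and fin: "finite S" and \<pi>: "\<pi> \<in> S"
  shows "Kmap C S D T Fo Fm (sblock \<pi> :: 'm \<Rightarrow> 'k::comm_ring_1)
     = (\<lambda>h. of_nat (nphi C D T Fo Fm \<pi>) * sblock (blk T Fm \<pi>) h)"
proof
  fix g
  note Q = qs_morphismD(1)[OF F]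
  have "Kmap C S D T Fo Fm (sblock \<pi> :: 'm \<Rightarrow> 'k) g = (\<Sum>\<sigma>\<in>S. if \<sigma> = \<pi> then
      (if g \<in> blk T Fm \<pi> then of_nat (nphi C D T Fo Fm \<pi>) else 0) else 0)"
    unfolding Kmap_def
  proof (rule sum.cong[OF refl])
    fix \<sigma> assume "\<sigma> \<in> S"
    then have "(SOME f. f \<in> \<sigma>) \<in> \<pi> \<longleftrightarrow> \<sigma> = \<pi>"
      using qs_block_unique[OF Q _ \<pi>] qs_some_in_block[OF Q] by blast
    then show "(if g \<in> blk T Fm \<sigma> then of_nat (nphi C D T Fo Fm \<sigma>) * sblock \<pi> (SOME f. f \<in> \<sigma>) else 0)
      = (if \<sigma> = \<pi> then (if g \<in> blk T Fm \<pi> then of_nat (nphi C D T Fo Fm \<pi>) else 0) else (0::'k))"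
      by (auto simp: sblock_def)
  qed
  also have "\<dots> = of_nat (nphi C D T Fo Fm \<pi>) * sblock (blk T Fm \<pi>) g"
    using fin \<pi> by (simp add: sblock_def)
  finally show "Kmap C S D T Fo Fm (sblock \<pi> :: 'm \<Rightarrow> 'k) g
      = of_nat (nphi C D T Fo Fm \<pi>) * sblock (blk T Fm \<pi>) g" .
qed

lemma Kmap_nonzero:
  assumes "Kmap C S D T Fo Fm a g \<noteq> 0"
  shows "\<exists>\<sigma>\<in>S. g \<in> blk T Fm \<sigma>"
proof (rule ccontr)
  assume "\<not> (\<exists>\<sigma>\<in>S. g \<in> blk T Fm \<sigma>)"
  then have "Kmap C S D T Fo Fm a g = 0" unfolding Kmap_def by (intro sum.neutral) auto
  with assms show False by contradiction
qed

lemma block_const_Kmap: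
  assumes F: "qs_morphism C S D T Fo Fm"
  shows "block_const D T (Kmap C S D T Fo Fm a)"
  unfolding block_const_def
proof (intro conjI allI impI ballI)
  note Q = qs_morphismD(2)[OF F]
  fix h assume h: "h \<notin> Mor D"
  have "h \<notin> blk T Fm \<sigma>" if "\<sigma> \<in> S" for \<sigma>
    using qs_block_subset[OF Q blk_in[OF F that]] h by blast
  then show "Kmap C S D T Fo Fm a h = 0"
    using Kmap_nonzero[of C S D T Fo Fm a h] by blast
next
  note Q = qs_morphismD(2)[OF F]
  fix \<tau> f g assume \<tau>: "\<tau> \<in> T" and fg: "f \<in> \<tau>" "g \<in> \<tau>"
  have "f \<in> blk T Fm \<sigma> \<longleftrightarrow> g \<in> blk T Fm \<sigma>" if "\<sigma> \<in> S" for \<sigma>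
    using qs_block_unique[OF Q blk_in[OF F that] \<tau>] fg by blast
  then show "Kmap C S D T Fo Fm a f = Kmap C S D T Fo Fm a g"
    unfolding Kmap_def by (intro sum.cong) auto
qed

lemma sch_alg_Kmap:
  "qs_morphism C S D T Fo Fm \<Longrightarrow> finite T \<Longrightarrow> Kmap C S D T Fo Fm a \<in> sch_alg D T"
  by (simp add: sch_alg_iff_block_const[OF qs_morphismD(2)] block_const_Kmap)

lemma Kmap_add:
  "Kmap C S D T Fo Fm (\<lambda>h. a h + b h) = (\<lambda>h. Kmap C S D T Fo Fm a h + Kmap C S D T Fo Fm b h)"
  unfolding Kmap_def by (auto simp: sum.distrib[symmetric] distrib_left intro!: sum.cong)

lemma Kmap_scale: "Kmap C S D T Fo Fm (\<lambda>h. k * a h) = (\<lambda>h. k * Kmap C S D T Fo Fm a h)"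
  unfolding Kmap_def by (auto simp: sum_distrib_left intro!: sum.cong)

section \<open>Blocks of basic quasi-schemoids\<close>

lemma groupoid_cancel_left:
  assumes grp: "groupoid C" and M: "a \<in> Mor C" "b \<in> Mor C" "b' \<in> Mor C"
    and "Dom C a = Cod C b" "Dom C a = Cod C b'" "Comp C a b = Comp C a b'"
  shows "b = b'"
proof -
  have cat: "category C" using grp unfolding groupoid_def by blast
  obtain a' where a': "a' \<in> Mor C" "Dom C a' = Cod C a" "Comp C a' a = Id C (Dom C a)"
    using groupoid_inverse[OF grp M(1)] by blast
  have "b = Comp C a' (Comp C a b)" if "b \<in> Mor C" "Dom C a = Cod C b" for b
    using cat_assoc[OF cat that(1) M(1) a'(1) a'(2) that(2)] a'(3) cat_id_left[OF cat that(1)] that(2)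
    by simp
  then show ?thesis using assms(3-) by metis
qed

lemma unital_Id_cod_same_block:
  assumes U: "unital D T" and \<tau>: "\<tau> \<in> T" "p \<in> \<tau>" "p' \<in> \<tau>" and I: "I \<in> T" "Id D (Cod D p) \<in> I"
  shows "Id D (Cod D p') \<in> I"
proof -
  have Q: "quasi_schemoid D T" using U unfolding unital_def by blast
  have cat: "category D" using qs_category[OF Q] .
  have pM: "p \<in> Mor D" using qs_block_subset[OF Q \<tau>(1)] \<tau>(2) by blast
  have "(Id D (Cod D p), p) \<in> factor_pairs D I \<tau> p"
    using I(2) \<tau>(2) cat_id_dom[OF cat cat_cod[OF cat pM]] cat_id_left[OF cat pM]
    unfolding factor_pairs_def by simp
  moreover have "factor_pairs D I \<tau> p \<approx> factor_pairs D I \<tau> p'"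
    using qs_factor_pairs_eqpoll[OF Q I(1) \<tau>(1) \<tau>] .
  ultimately have "factor_pairs D I \<tau> p' \<noteq> {}" by (metis empty_iff eqpoll_empty_iff_empty)
  then obtain e b where eb: "e \<in> I" "b \<in> \<tau>" "Dom D e = Cod D b" "Comp D e b = p'"
    unfolding factor_pairs_def by blast
  have "I \<subseteq> Id D ` Obj D"
    using unital_block_of_Id[OF U I] cat_cod[OF cat pM] by blast
  then obtain y where y: "y \<in> Obj D" "e = Id D y" using eb(1) by blast
  have bM: "b \<in> Mor D" using qs_block_subset[OF Q \<tau>(1)] eb(2) by blast
  have "y = Cod D b" using eb(3) y cat_id_dom[OF cat y(1)] by simp
  then have "p' = b" using eb(4) y cat_id_left[OF cat bM] by simp
  then show ?thesis using eb(1) y \<open>y = Cod D b\<close> by simp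
qed

lemma groupoid_block_reaches_cod:
  assumes Q: "quasi_schemoid D T" and grp: "groupoid D"
    and \<tau>: "\<tau> \<in> T" "g \<in> \<tau>" and u: "u \<in> Obj D" and I: "I \<in> T" "Id D (Cod D g) \<in> I" "Id D u \<in> I"
  shows "\<exists>g'\<in>\<tau>. Cod D g' = u"
proof -
  have cat: "category D" using qs_category[OF Q] .
  have gM: "g \<in> Mor D" using qs_block_subset[OF Q \<tau>(1)] \<tau>(2) by blast
  obtain r where r: "r \<in> Mor D" "Dom D r = Cod D g" "Cod D r = Dom D g" "Comp D g r = Id D (Cod D g)"
    using groupoid_inverse[OF grp gM] by metis
  obtain \<rho> where \<rho>: "\<rho> \<in> T" "r \<in> \<rho>" using qs_block_exists[OF Q r(1)] by blast
  have "(g, r) \<in> factor_pairs D \<tau> \<rho> (Id D (Cod D g))"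
    unfolding factor_pairs_def using \<tau>(2) \<rho>(2) r by simp
  moreover have "factor_pairs D \<tau> \<rho> (Id D (Cod D g)) \<approx> factor_pairs D \<tau> \<rho> (Id D u)"
    using qs_factor_pairs_eqpoll[OF Q \<tau>(1) \<rho>(1) I] .
  ultimately have "factor_pairs D \<tau> \<rho> (Id D u) \<noteq> {}" by (metis empty_iff eqpoll_empty_iff_empty)
  then obtain g' r' where gr: "g' \<in> \<tau>" "r' \<in> \<rho>" "Dom D g' = Cod D r'" "Comp D g' r' = Id D u"
    unfolding factor_pairs_def by blast
  have "g' \<in> Mor D" "r' \<in> Mor D"
    using qs_block_subset[OF Q \<tau>(1)] qs_block_subset[OF Q \<rho>(1)] gr(1,2) by blast+
  then have "Cod D g' = u" using cat_comp_cod[OF cat _ _ gr(3)] gr(4) cat_id_cod[OF cat u] by metis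
  with gr(1) show ?thesis by blast
qed

lemma basic_block_cod_transfer:
  assumes U: "unital D T" and grp: "groupoid D"
    and \<tau>: "\<tau> \<in> T" "p \<in> \<tau>" "p' \<in> \<tau>" and \<rho>: "\<rho> \<in> T" "g \<in> \<rho>" "Cod D g = Cod D p"
  shows "\<exists>g'\<in>\<rho>. Cod D g' = Cod D p'"
proof -
  have Q: "quasi_schemoid D T" using U unfolding unital_def by blast
  have cat: "category D" using qs_category[OF Q] .
  have M: "p \<in> Mor D" "p' \<in> Mor D" using qs_block_subset[OF Q \<tau>(1)] \<tau>(2,3) by blast+
  obtain I where I: "I \<in> T" "Id D (Cod D p) \<in> I"
    using qs_block_exists[OF Q cat_id[OF cat cat_cod[OF cat M(1)]]] by blast
  have "Id D (Cod D p') \<in> I" using unital_Id_cod_same_block[OF U \<tau> I] .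
  then show ?thesis
    using groupoid_block_reaches_cod[OF Q grp \<rho>(1,2) cat_cod[OF cat M(2)] I(1)] I(2) \<rho>(3) by simp
qed

section \<open>Fibres of a functor\<close>

definition fibre :: "('o1, 'm1) cat \<Rightarrow> ('m1 \<Rightarrow> 'm2) \<Rightarrow> 'o1 \<Rightarrow> 'm2 \<Rightarrow> 'm1 set" where
  "fibre C Fm x g = {f \<in> Mor C. Cod C f = x \<and> Fm f = g}"

lemma kernel_factor_in_fibre:
  assumes F: "is_functor C D Fo Fm" and \<sigma>: "\<sigma> \<subseteq> Mor C" and f0: "f0 \<in> Mor C"
    and ab: "(a, b) \<in> factor_pairs C \<sigma> {b \<in> Mor C. Fm b \<in> Id D ` Obj D} f0"
  shows "Cod C a = Cod C f0 \<and> Fm a = Fm f0"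
proof -
  have cat: "category C" and catD: "category D"
    using functor_source[OF F] functor_target[OF F] .
  obtain y where ab': "a \<in> Mor C" "b \<in> Mor C" "y \<in> Obj D" "Fm b = Id D y"
      "Dom C a = Cod C b" "Comp C a b = f0"
    using ab \<sigma> unfolding factor_pairs_def by blast
  have "y = Dom D (Fm a)"
    using functor_dom[OF F ab'(1)] functor_cod[OF F ab'(2)] ab'(4,5) cat_id_cod[OF catD ab'(3)] by simp
  then have "Fm a = Comp D (Fm a) (Fm b)"
    using ab'(4) cat_id_right[OF catD functor_mor[OF F ab'(1)]] by simp
  also have "\<dots> = Fm f0" using functor_comp[OF F ab'(2,1,5)] ab'(6) by simp
  finally show ?thesis using cat_comp_cod[OF cat ab'(2,1,5)] ab'(6) by simp
qed

lemma fibre_in_kernel_factor: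
  assumes grp: "groupoid C" and F: "is_functor C D Fo Fm" and f0: "f0 \<in> Mor C"
    and a: "a \<in> \<sigma>" "a \<in> Mor C" "Cod C a = Cod C f0" "Fm a = Fm f0"
  shows "\<exists>b. (a, b) \<in> factor_pairs C \<sigma> {b \<in> Mor C. Fm b \<in> Id D ` Obj D} f0"
proof -
  have cat: "category C" using functor_source[OF F] .
  obtain a' where a': "a' \<in> Mor C" "Dom C a' = Cod C a" "Cod C a' = Dom C a"
      "Comp C a' a = Id C (Dom C a)" "Comp C a a' = Id C (Cod C a)"
    using groupoid_inverse[OF grp a(2)] by blast
  define b where "b = Comp C a' f0"
  have d: "Dom C a' = Cod C f0" using a'(2) a(3) by simp
  have bM: "b \<in> Mor C" and cb: "Cod C b = Dom C a"
    unfolding b_def using cat_comp[OF cat f0 a'(1) d] cat_comp_cod[OF cat f0 a'(1) d] a'(3) by simp_all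
  have "Comp C a b = Comp C (Comp C a a') f0"
    unfolding b_def using cat_assoc[OF cat f0 a'(1) a(2) _ d] a'(3) by simp
  also have "\<dots> = f0" using a'(5) a(3) cat_id_left[OF cat f0] by simp
  finally have ab: "Comp C a b = f0" .
  have "Fm b = Comp D (Fm a') (Fm a)"
    unfolding b_def using functor_comp[OF F f0 a'(1) d] a(4) by simp
  also have "\<dots> = Id D (Fo (Dom C a))"
    using functor_comp[OF F a(2) a'(1,2)] a'(4) functor_Id[OF F cat_dom[OF cat a(2)]] by simp
  finally have "Fm b \<in> Id D ` Obj D"
    using functor_obj[OF F cat_dom[OF cat a(2)]] by simp
  then show ?thesis
    unfolding factor_pairs_def using a(1) bM cb ab by auto
qed

lemma card_fibre_eq_card_kernel_factor_pairs:
  assumes grp: "groupoid C" and F: "is_functor C D Fo Fm" and \<sigma>: "\<sigma> \<subseteq> Mor C" and f0: "f0 \<in> Mor C"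
  shows "card {f \<in> \<sigma>. Cod C f = Cod C f0 \<and> Fm f = Fm f0}
    = card (factor_pairs C \<sigma> {b \<in> Mor C. Fm b \<in> Id D ` Obj D} f0)"
proof -
  let ?P = "factor_pairs C \<sigma> {b \<in> Mor C. Fm b \<in> Id D ` Obj D} f0"
  have inj: "inj_on fst ?P"
  proof (rule inj_onI)
    fix p q assume "p \<in> ?P" "q \<in> ?P" "fst p = fst q"
    then show "p = q"
      using groupoid_cancel_left[OF grp] \<sigma> unfolding factor_pairs_def by auto
  qed
  have "fst ` ?P = {f \<in> \<sigma>. Cod C f = Cod C f0 \<and> Fm f = Fm f0}"
  proof
    show "fst ` ?P \<subseteq> {f \<in> \<sigma>. Cod C f = Cod C f0 \<and> Fm f = Fm f0}"
    proof
      fix a assume "a \<in> fst ` ?P"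
      then obtain b where ab: "(a, b) \<in> ?P" by force
      then have "a \<in> \<sigma>" unfolding factor_pairs_def by blast
      with kernel_factor_in_fibre[OF F \<sigma> f0 ab]
      show "a \<in> {f \<in> \<sigma>. Cod C f = Cod C f0 \<and> Fm f = Fm f0}" by blast
    qed
    show "{f \<in> \<sigma>. Cod C f = Cod C f0 \<and> Fm f = Fm f0} \<subseteq> fst ` ?P"
    proof
      fix a assume "a \<in> {f \<in> \<sigma>. Cod C f = Cod C f0 \<and> Fm f = Fm f0}"
      then have "a \<in> \<sigma>" "a \<in> Mor C" "Cod C a = Cod C f0" "Fm a = Fm f0" using \<sigma> by blast+
      then obtain b where "(a, b) \<in> ?P" using fibre_in_kernel_factor[OF grp F f0] by blast
      then show "a \<in> fst ` ?P" by (rule rev_image_eqI) simp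
    qed
  qed
  with card_image[OF inj] show ?thesis by simp
qed

lemma kernel_eq_Union_blocks:
  assumes F: "qs_morphism C S D T Fo Fm" and U: "unital D T"
  shows "{b \<in> Mor C. Fm b \<in> Id D ` Obj D} = \<Union>{\<rho> \<in> S. Fm ` \<rho> \<subseteq> Id D ` Obj D}"
proof
  note Q = qs_morphismD(1)[OF F]
  show "{b \<in> Mor C. Fm b \<in> Id D ` Obj D} \<subseteq> \<Union>{\<rho> \<in> S. Fm ` \<rho> \<subseteq> Id D ` Obj D}"
  proof
    fix b assume b: "b \<in> {b \<in> Mor C. Fm b \<in> Id D ` Obj D}"
    then obtain \<rho> where \<rho>: "\<rho> \<in> S" "b \<in> \<rho>" using qs_block_exists[OF Q] by blast
    have "blk T Fm \<rho> \<subseteq> Id D ` Obj D"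
      using unital_block_of_Id[OF U blk_in[OF F \<rho>(1)] blk_image[OF F \<rho>]] b by blast
    then show "b \<in> \<Union>{\<rho> \<in> S. Fm ` \<rho> \<subseteq> Id D ` Obj D}"
      using blk_image[OF F \<rho>(1)] \<rho> by blast
  qed
  show "\<Union>{\<rho> \<in> S. Fm ` \<rho> \<subseteq> Id D ` Obj D} \<subseteq> {b \<in> Mor C. Fm b \<in> Id D ` Obj D}"
    using qs_block_subset[OF Q] by blast
qed

lemma composable_pairs_over_fibre:
  assumes F: "is_functor C D Fo Fm"
  shows "(\<Union>h\<in>fibre C Fm x g. factor_pairs C (Mor C) (Mor C) h)
    = (\<Union>(p, q)\<in>factor_pairs D (Mor D) (Mor D) g. Sigma (fibre C Fm x p) (\<lambda>f. fibre C Fm (Dom C f) q))"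
  (is "?L = ?R")
proof
  have cat: "category C" using functor_source[OF F] .
  show "?L \<subseteq> ?R"
  proof
    fix z assume "z \<in> ?L"
    then obtain h f1 f2 where z: "z = (f1, f2)" and h: "Cod C h = x" "Fm h = g"
      and f: "f1 \<in> Mor C" "f2 \<in> Mor C" "Dom C f1 = Cod C f2" "Comp C f1 f2 = h"
      unfolding fibre_def factor_pairs_def by auto
    have "(Fm f1, Fm f2) \<in> factor_pairs D (Mor D) (Mor D) g"
      using f h functor_mor[OF F] functor_dom[OF F] functor_cod[OF F] functor_comp[OF F f(2,1,3)]
      unfolding factor_pairs_def by auto
    moreover have "(f1, f2) \<in> Sigma (fibre C Fm x (Fm f1)) (\<lambda>f. fibre C Fm (Dom C f) (Fm f2))"
      using f h cat_comp_cod[OF cat f(2,1,3)] unfolding fibre_def by auto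
    ultimately show "z \<in> ?R" unfolding z by blast
  qed
  show "?R \<subseteq> ?L"
  proof
    fix z assume "z \<in> ?R"
    then obtain p q f1 f2 where z: "z = (f1, f2)" and pq: "Comp D p q = g"
      and f: "f1 \<in> Mor C" "Cod C f1 = x" "Fm f1 = p" "f2 \<in> Mor C" "Cod C f2 = Dom C f1" "Fm f2 = q"
      unfolding fibre_def factor_pairs_def by auto
    have "Comp C f1 f2 \<in> fibre C Fm x g"
      using f pq cat_comp[OF cat f(4,1)] cat_comp_cod[OF cat f(4,1)] functor_comp[OF F f(4,1)]
      unfolding fibre_def by simp
    moreover have "(f1, f2) \<in> factor_pairs C (Mor C) (Mor C) (Comp C f1 f2)"
      using f unfolding factor_pairs_def by simp
    ultimately show "z \<in> ?L" unfolding z by blast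
  qed
qed

lemma sum_fibre_cat_mult:
  assumes F: "is_functor C D Fo Fm" and finC: "finite (Mor C)" and finD: "finite (Mor D)"
  shows "sum (cat_mult C a b) (fibre C Fm x g) = (\<Sum>(p, q)\<in>factor_pairs D (Mor D) (Mor D) g.
      \<Sum>f\<in>fibre C Fm x p. a f * sum b (fibre C Fm (Dom C f) q))"
proof -
  let ?F = "\<lambda>(f1, f2). a f1 * b f2"
  have fin_fibre: "finite (fibre C Fm y q)" for y q
    using finC by (auto simp: fibre_def)
  have fin_Sigma: "finite (Sigma (fibre C Fm x p) (\<lambda>f. fibre C Fm (Dom C f) q))" for p q
    using fin_fibre by blast
  have fin_pairs: "finite (factor_pairs C (Mor C) (Mor C) h)" for h
    using finC by (auto simp: factor_pairs_def intro: finite_subset[of _ "Mor C \<times> Mor C"])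
  have fin_pairsD: "finite (factor_pairs D (Mor D) (Mor D) g)"
    using finD by (auto simp: factor_pairs_def intro: finite_subset[of _ "Mor D \<times> Mor D"])
  have "sum (cat_mult C a b) (fibre C Fm x g)
      = sum ?F (\<Union>h\<in>fibre C Fm x g. factor_pairs C (Mor C) (Mor C) h)"
    unfolding cat_mult_factor_pairs
    by (rule sum.UNION_disjoint[symmetric]) (use fin_fibre fin_pairs in \<open>auto simp: factor_pairs_def\<close>)
  also have "\<dots> = sum ?F (\<Union>(p, q)\<in>factor_pairs D (Mor D) (Mor D) g.
      Sigma (fibre C Fm x p) (\<lambda>f. fibre C Fm (Dom C f) q))"
    unfolding composable_pairs_over_fibre[OF F] ..
  also have "\<dots> = (\<Sum>(p, q)\<in>factor_pairs D (Mor D) (Mor D) g.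
      sum ?F (Sigma (fibre C Fm x p) (\<lambda>f. fibre C Fm (Dom C f) q)))"
    by (subst sum.UNION_disjoint) (auto simp: fin_pairsD fin_Sigma split_beta, auto simp: fibre_def)
  also have "\<dots> = (\<Sum>(p, q)\<in>factor_pairs D (Mor D) (Mor D) g.
      \<Sum>f\<in>fibre C Fm x p. a f * sum b (fibre C Fm (Dom C f) q))"
  proof (rule sum.cong[OF refl], clarify)
    fix p q
    show "sum ?F (Sigma (fibre C Fm x p) (\<lambda>f. fibre C Fm (Dom C f) q))
        = (\<Sum>f\<in>fibre C Fm x p. a f * sum b (fibre C Fm (Dom C f) q))"
      unfolding sum_distrib_left by (subst sum.Sigma) (simp_all add: fin_fibre)
  qed
  finally show ?thesis .
qed

locale admissible_basic =
  fixes C :: "('o1, 'm1) cat" and S :: "'m1 set set" and D :: "('o2, 'm2) cat" and T :: "'m2 set set"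
    and Fo :: "'o1 \<Rightarrow> 'o2" and Fm :: "'m1 \<Rightarrow> 'm2"
  assumes admissible: "admissible C S D T Fo Fm"
    and source: "finite_basic C S" and target: "finite_basic D T"
begin

lemmas qs_morphism = admissible_qs_morphism[OF admissible]
lemmas Fm_functor = qs_morphismD(3)[OF qs_morphism]
lemmas source_qs = finite_basicD(1)[OF source] and source_finite = finite_basicD(2)[OF source]
lemmas target_qs = finite_basicD(1)[OF target] and target_finite = finite_basicD(2)[OF target]

lemma fibre_card_eq:
  assumes \<sigma>: "\<sigma> \<in> S" and f: "f \<in> \<sigma>" "f' \<in> \<sigma>"
  shows "card {h \<in> \<sigma>. Cod C h = Cod C f \<and> Fm h = Fm f} = card {h \<in> \<sigma>. Cod C h = Cod C f' \<and> Fm h = Fm f'}"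
proof -
  let ?K = "{\<rho> \<in> S. Fm ` \<rho> \<subseteq> Id D ` Obj D}"
  have sub: "\<sigma> \<subseteq> Mor C" using qs_block_subset[OF source_qs \<sigma>] .
  have card: "card {h \<in> \<sigma>. Cod C h = Cod C f \<and> Fm h = Fm f} = (\<Sum>\<rho>\<in>?K. card (factor_pairs C \<sigma> \<rho> f))"
    if "f \<in> \<sigma>" for f
  proof -
    have "card {h \<in> \<sigma>. Cod C h = Cod C f \<and> Fm h = Fm f} = card (factor_pairs C (\<Union>{\<sigma>}) (\<Union>?K) f)"
      using card_fibre_eq_card_kernel_factor_pairs[OF finite_basicD(3)[OF source] Fm_functor sub]
        kernel_eq_Union_blocks[OF qs_morphism finite_basicD(4)[OF target]] sub that by auto
    also have "\<dots> = (\<Sum>\<rho>\<in>?K. card (factor_pairs C \<sigma> \<rho> f))"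
      using \<sigma> by (subst card_factor_pairs_Union[OF source_qs source_finite]) auto
    finally show ?thesis .
  qed
  show ?thesis
    unfolding card[OF f(1)] card[OF f(2)]
    using factor_pairs_card_eq[OF source_qs source_finite \<sigma> _ \<sigma> f] by (intro sum.cong) auto
qed

lemma nphi_fibre_card:
  assumes \<sigma>: "\<sigma> \<in> S" and x: "x \<in> Obj C" and g: "g \<in> blk T Fm \<sigma>" "Cod D g = Fo x"
  shows "card {f \<in> \<sigma>. Cod C f = x \<and> Fm f = g} = nphi C D T Fo Fm \<sigma>"
proof -
  define f0 where "f0 = (SOME f. f \<in> \<sigma>)"
  have f0: "f0 \<in> \<sigma>" unfolding f0_def using qs_some_in_block[OF source_qs \<sigma>] .
  let ?n = "card {f \<in> \<sigma>. Cod C f = Cod C f0 \<and> Fm f = Fm f0}"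
  have "finite {f \<in> \<sigma>. Cod C f = Cod C f0 \<and> Fm f = Fm f0}"
    using qs_block_subset[OF source_qs \<sigma>] source_finite by (auto intro: finite_subset)
  then have "?n > 0" using f0 by (auto simp: card_gt_0_iff)
  moreover have "card {f \<in> \<sigma>. Cod C f = x' \<and> Fm f = g'} = ?n"
    if lift: "x' \<in> Obj C" "g' \<in> blk T Fm \<sigma>" "Cod D g' = Fo x'" for x' g'
  proof -
    obtain f1 where "f1 \<in> \<sigma>" "Cod C f1 = x'" "Fm f1 = g'"
      using admissible_lift[OF admissible lift(1) \<sigma> lift(2,3)] by blast
    then show ?thesis using fibre_card_eq[OF \<sigma> _ f0] by blast
  qed
  ultimately have "\<exists>n. n > 0 \<and> (\<forall>x\<in>Obj C. \<forall>g\<in>blk T Fm \<sigma>. Cod D g = Fo x \<longrightarrow>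
      card {f \<in> \<sigma>. Cod C f = x \<and> Fm f = g} = n)" by blast
  from someI_ex[OF this] show ?thesis using x g unfolding nphi_def by blast
qed

lemma Kmap_eq_sum_fibre:
  assumes b: "block_const C S b" and y: "y \<in> Obj C" and q: "Cod D q = Fo y"
  shows "Kmap C S D T Fo Fm b q = sum b (fibre C Fm y q)"
proof -
  have "sum b (fibre C Fm y q) = (\<Sum>\<sigma>\<in>S. sum b (fibre C Fm y q \<inter> \<sigma>))"
    by (rule sum_over_blocks[OF source_qs source_finite]) (auto simp: fibre_def)
  also have "\<dots> = Kmap C S D T Fo Fm b q" unfolding Kmap_def
  proof (rule sum.cong[OF refl])
    fix \<sigma> assume \<sigma>: "\<sigma> \<in> S"
    have fib: "fibre C Fm y q \<inter> \<sigma> = {f \<in> \<sigma>. Cod C f = y \<and> Fm f = q}"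
      using qs_block_subset[OF source_qs \<sigma>] unfolding fibre_def by blast
    show "sum b (fibre C Fm y q \<inter> \<sigma>)
        = (if q \<in> blk T Fm \<sigma> then of_nat (nphi C D T Fo Fm \<sigma>) * b (SOME f. f \<in> \<sigma>) else 0)"
    proof (cases "q \<in> blk T Fm \<sigma>")
      case True
      have "sum b (fibre C Fm y q \<inter> \<sigma>) = (\<Sum>_\<in>{f \<in> \<sigma>. Cod C f = y \<and> Fm f = q}. b (SOME f. f \<in> \<sigma>))"
        unfolding fib using block_const_rep[OF b source_qs \<sigma>] by (intro sum.cong) auto
      with True show ?thesis using nphi_fibre_card[OF \<sigma> y True q] by simp
    next
      case False
      then have "fibre C Fm y q \<inter> \<sigma> = {}" unfolding fib using blk_image[OF qs_morphism \<sigma>] by blast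
      with False show ?thesis by simp
    qed
  qed
  finally show ?thesis ..
qed

lemma Kmap_cat_mult_at:
  assumes a: "block_const C S a" and b: "block_const C S b"
    and x: "x \<in> Obj C" and g: "Cod D g = Fo x"
  shows "Kmap C S D T Fo Fm (cat_mult C a b) g
     = cat_mult D (Kmap C S D T Fo Fm a) (Kmap C S D T Fo Fm b) g"
proof -
  have "Kmap C S D T Fo Fm (cat_mult C a b) g = sum (cat_mult C a b) (fibre C Fm x g)"
    using Kmap_eq_sum_fibre[OF block_const_cat_mult[OF finite_qsI[OF source] a b] x g] .
  also have "\<dots> = (\<Sum>(p, q)\<in>factor_pairs D (Mor D) (Mor D) g.
      \<Sum>f\<in>fibre C Fm x p. a f * sum b (fibre C Fm (Dom C f) q))"
    using sum_fibre_cat_mult[OF Fm_functor source_finite target_finite] .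
  also have "\<dots> = (\<Sum>(p, q)\<in>factor_pairs D (Mor D) (Mor D) g.
      Kmap C S D T Fo Fm a p * Kmap C S D T Fo Fm b q)"
  proof (rule sum.cong[OF refl], clarify)
    fix p q assume "(p, q) \<in> factor_pairs D (Mor D) (Mor D) g"
    then have pq: "p \<in> Mor D" "q \<in> Mor D" "Dom D p = Cod D q" "Comp D p q = g"
      unfolding factor_pairs_def by auto
    have "Cod D p = Fo x"
      using cat_comp_cod[OF functor_target[OF Fm_functor] pq(2,1,3)] pq(4) g by simp
    have "sum b (fibre C Fm (Dom C f) q) = Kmap C S D T Fo Fm b q" if "f \<in> fibre C Fm x p" for f
    proof -
      have f: "f \<in> Mor C" "Fm f = p" using that unfolding fibre_def by auto
      then have "Cod D q = Fo (Dom C f)" using pq(3) functor_dom[OF Fm_functor f(1)] by simp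
      then show ?thesis
        using Kmap_eq_sum_fibre[OF b cat_dom[OF functor_source[OF Fm_functor] f(1)]] by simp
    qed
    then have "(\<Sum>f\<in>fibre C Fm x p. a f * sum b (fibre C Fm (Dom C f) q))
        = sum a (fibre C Fm x p) * Kmap C S D T Fo Fm b q"
      by (simp add: sum_distrib_right)
    also have "\<dots> = Kmap C S D T Fo Fm a p * Kmap C S D T Fo Fm b q"
      using Kmap_eq_sum_fibre[OF a x \<open>Cod D p = Fo x\<close>] by simp
    finally show "(\<Sum>f\<in>fibre C Fm x p. a f * sum b (fibre C Fm (Dom C f) q))
        = Kmap C S D T Fo Fm a p * Kmap C S D T Fo Fm b q" .
  qed
  also have "\<dots> = cat_mult D (Kmap C S D T Fo Fm a) (Kmap C S D T Fo Fm b) g"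
    unfolding cat_mult_factor_pairs by (simp add: split_beta)
  finally show ?thesis .
qed

lemma Kmap_eq_0_off_image:
  assumes \<rho>: "\<rho> \<in> T" "g \<in> \<rho>" "\<forall>g'\<in>\<rho>. Cod D g' \<notin> Fo ` Obj C" and p: "Cod D p = Cod D g"
  shows "Kmap C S D T Fo Fm a p = 0"
proof (rule ccontr)
  assume "Kmap C S D T Fo Fm a p \<noteq> 0"
  then obtain \<sigma> where \<sigma>: "\<sigma> \<in> S" "p \<in> blk T Fm \<sigma>" by (blast dest: Kmap_nonzero)
  obtain f where f: "f \<in> \<sigma>" using qs_block_nonempty[OF source_qs \<sigma>(1)] by blast
  have fM: "f \<in> Mor C" using qs_block_subset[OF source_qs \<sigma>(1)] f by blast
  obtain g' where "g' \<in> \<rho>" "Cod D g' = Cod D (Fm f)"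
    using basic_block_cod_transfer[OF finite_basicD(4,3)[OF target] blk_in[OF qs_morphism \<sigma>(1)]
        \<sigma>(2) blk_image[OF qs_morphism \<sigma>(1) f] \<rho>(1,2) p[symmetric]] by blast
  then show False
    using \<rho>(3) functor_cod[OF Fm_functor fM] cat_cod[OF functor_source[OF Fm_functor] fM] by auto
qed

lemma cat_mult_Kmap_eq_0_off_image:
  assumes "\<rho> \<in> T" "g \<in> \<rho>" "\<forall>g'\<in>\<rho>. Cod D g' \<notin> Fo ` Obj C"
  shows "cat_mult D (Kmap C S D T Fo Fm a) (Kmap C S D T Fo Fm b) g = 0"
  unfolding cat_mult_factor_pairs
proof (rule sum.neutral, clarify)
  fix p q assume "(p, q) \<in> factor_pairs D (Mor D) (Mor D) g"
  then have "Cod D p = Cod D g"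
    using cat_comp_cod[OF qs_category[OF target_qs]] unfolding factor_pairs_def by force
  then show "Kmap C S D T Fo Fm a p * Kmap C S D T Fo Fm b q = 0"
    using Kmap_eq_0_off_image[OF assms, of p a] by simp
qed

lemma Kmap_cat_mult:
  assumes a: "block_const C S a" and b: "block_const C S b"
  shows "Kmap C S D T Fo Fm (cat_mult C a b) = cat_mult D (Kmap C S D T Fo Fm a) (Kmap C S D T Fo Fm b)"
    (is "?L = ?R")
proof
  fix g
  have L: "block_const D T ?L" using block_const_Kmap[OF qs_morphism] .
  have R: "block_const D T ?R"
    using block_const_cat_mult[OF finite_qsI[OF target] block_const_Kmap block_const_Kmap] qs_morphism
    by blast
  show "?L g = ?R g"
  proof (cases "g \<in> Mor D")
    case False
    then show ?thesis using block_const_outside[OF L] block_const_outside[OF R] by simp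
  next
    case True
    then obtain \<tau> where \<tau>: "\<tau> \<in> T" "g \<in> \<tau>" using qs_block_exists[OF target_qs] by blast
    show ?thesis
    proof (cases "\<exists>g'\<in>\<tau>. Cod D g' \<in> Fo ` Obj C")
      case True
      then obtain x g' where g': "g' \<in> \<tau>" "x \<in> Obj C" "Cod D g' = Fo x" by blast
      have "?L g = ?L g'" using block_const_eq[OF L \<tau> g'(1)] .
      also have "\<dots> = ?R g'" using Kmap_cat_mult_at[OF a b g'(2,3)] .
      also have "\<dots> = ?R g" using block_const_eq[OF R \<tau>(1) g'(1) \<tau>(2)] .
      finally show ?thesis .
    next
      case False
      then have off: "\<forall>g'\<in>\<tau>. Cod D g' \<notin> Fo ` Obj C" by blast
      show ?thesis
        using Kmap_eq_0_off_image[OF \<tau> off refl, of "cat_mult C a b"]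
          cat_mult_Kmap_eq_0_off_image[OF \<tau> off, of a b] by simp
    qed
  qed
qed

end

section \<open>Functoriality\<close>

lemma nphi_id:
  assumes Q: "quasi_schemoid C S" and \<sigma>: "\<sigma> \<in> S"
  shows "nphi C C S id id \<sigma> = 1"
proof -
  let ?P = "\<lambda>n. n > 0 \<and> (\<forall>x\<in>Obj C. \<forall>g\<in>blk S id \<sigma>. Cod C g = id x \<longrightarrow>
      card {f \<in> \<sigma>. Cod C f = x \<and> id f = g} = n)"
  have single: "{f \<in> \<sigma>. Cod C f = x \<and> id f = g} = {g}" if "g \<in> \<sigma>" "Cod C g = x" for x g
    using that by auto
  have "?P 1" using single blk_id[OF Q \<sigma>] by simp
  then have "?P (nphi C C S id id \<sigma>)" unfolding nphi_def by (rule someI)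
  moreover obtain g where g: "g \<in> \<sigma>" using qs_block_nonempty[OF Q \<sigma>] by blast
  moreover have "Cod C g \<in> Obj C"
    using cat_cod[OF qs_category[OF Q]] qs_block_subset[OF Q \<sigma>] g by blast
  ultimately show ?thesis using single[OF g refl] blk_id[OF Q \<sigma>] by force
qed

lemma Kmap_id:
  assumes "finite_qs C S" and a: "block_const C S a"
  shows "Kmap C S C S id id a = a"
proof
  fix g
  note Q = finite_qsD(1)[OF assms(1)] and fin = finite_qsD(3)[OF assms(1)]
  have "Kmap C S C S id id a g = (\<Sum>\<sigma>\<in>S. a (SOME f. f \<in> \<sigma>) * sblock \<sigma> g)"
    unfolding Kmap_def by (intro sum.cong refl) (simp add: nphi_id[OF Q] blk_id[OF Q] sblock_def)
  also have "\<dots> = a g" using block_const_expansion[OF Q fin a, of g] by (rule sym)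
  finally show "Kmap C S C S id id a g = a g" .
qed

lemma admissible_basic_comp:
  assumes "admissible_basic C1 S1 C2 S2 Fo Fm" "admissible_basic C2 S2 C3 S3 Go Gm"
  shows "admissible_basic C1 S1 C3 S3 (Go \<circ> Fo) (Gm \<circ> Fm)"
  using assms admissible_comp unfolding admissible_basic_def by blast

lemma nphi_comp:
  assumes F: "admissible_basic C1 S1 C2 S2 Fo Fm" and G: "admissible_basic C2 S2 C3 S3 Go Gm"
    and \<sigma>: "\<sigma> \<in> S1"
  shows "nphi C1 C3 S3 (Go \<circ> Fo) (Gm \<circ> Fm) \<sigma> = nphi C1 C2 S2 Fo Fm \<sigma> * nphi C2 C3 S3 Go Gm (blk S2 Fm \<sigma>)"
proof -
  interpret F: admissible_basic C1 S1 C2 S2 Fo Fm by (rule F)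
  interpret G: admissible_basic C2 S2 C3 S3 Go Gm by (rule G)
  interpret GF: admissible_basic C1 S1 C3 S3 "Go \<circ> Fo" "Gm \<circ> Fm" by (rule admissible_basic_comp[OF F G])
  obtain f0 where f0: "f0 \<in> \<sigma>" using qs_block_nonempty[OF F.source_qs \<sigma>] by blast
  have f0M: "f0 \<in> Mor C1" using qs_block_subset[OF F.source_qs \<sigma>] f0 by blast
  define x where "x = Cod C1 f0"
  define g where "g = Gm (Fm f0)"
  let ?\<tau> = "blk S2 Fm \<sigma>"
  let ?H = "{h \<in> ?\<tau>. Cod C2 h = Fo x \<and> Gm h = g}"
  have x: "x \<in> Obj C1" unfolding x_def using cat_cod[OF functor_source[OF F.Fm_functor] f0M] .
  have Fx: "Fo x \<in> Obj C2" using functor_obj[OF F.Fm_functor x] .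
  have g: "g \<in> blk S3 (Gm \<circ> Fm) \<sigma>" unfolding g_def using blk_image[OF GF.qs_morphism \<sigma> f0] by simp
  have g\<tau>: "g \<in> blk S3 Gm ?\<tau>" using g blk_comp[OF F.qs_morphism G.qs_morphism \<sigma>] by simp
  have cod: "Cod C3 g = (Go \<circ> Fo) x"
    unfolding g_def x_def using functor_cod[OF GF.Fm_functor f0M] by simp
  have fibres: "{f \<in> \<sigma>. Cod C1 f = x \<and> (Gm \<circ> Fm) f = g} = (\<Union>h\<in>?H. {f \<in> \<sigma>. Cod C1 f = x \<and> Fm f = h})"
    using blk_image[OF F.qs_morphism \<sigma>] functor_cod[OF F.Fm_functor] qs_block_subset[OF F.source_qs \<sigma>]
    by auto
  have "finite ?H"
    using qs_block_subset[OF F.target_qs blk_in[OF F.qs_morphism \<sigma>]] F.target_finite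
    by (auto intro: finite_subset)
  moreover have "finite {f \<in> \<sigma>. Cod C1 f = x \<and> Fm f = h}" for h
    using qs_block_subset[OF F.source_qs \<sigma>] F.source_finite by (auto intro: finite_subset)
  ultimately have "card {f \<in> \<sigma>. Cod C1 f = x \<and> (Gm \<circ> Fm) f = g}
      = (\<Sum>h\<in>?H. card {f \<in> \<sigma>. Cod C1 f = x \<and> Fm f = h})"
    unfolding fibres by (intro card_UN_disjoint) auto
  also have "\<dots> = (\<Sum>h\<in>?H. nphi C1 C2 S2 Fo Fm \<sigma>)"
    using F.nphi_fibre_card[OF \<sigma> x] by (intro sum.cong) auto
  also have "\<dots> = nphi C2 C3 S3 Go Gm ?\<tau> * nphi C1 C2 S2 Fo Fm \<sigma>"
    using G.nphi_fibre_card[OF blk_in[OF F.qs_morphism \<sigma>] Fx g\<tau>] cod by simp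
  finally show ?thesis using GF.nphi_fibre_card[OF \<sigma> x g cod] by (simp add: mult.commute)
qed

lemma Kmap_Kmap:
  assumes F: "qs_morphism C1 S1 C2 S2 Fo Fm" and fin: "finite S2"
  shows "Kmap C2 S2 C3 S3 Go Gm (Kmap C1 S1 C2 S2 Fo Fm a) g = (\<Sum>\<sigma>\<in>S1.
      if g \<in> blk S3 Gm (blk S2 Fm \<sigma>) then of_nat (nphi C2 C3 S3 Go Gm (blk S2 Fm \<sigma>))
        * (of_nat (nphi C1 C2 S2 Fo Fm \<sigma>) * a (SOME f. f \<in> \<sigma>)) else 0)"
proof -
  let ?nF = "\<lambda>\<sigma>. of_nat (nphi C1 C2 S2 Fo Fm \<sigma>)" and ?nG = "\<lambda>\<tau>. of_nat (nphi C2 C3 S3 Go Gm \<tau>)"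
  let ?a = "\<lambda>\<sigma>. a (SOME f. f \<in> \<sigma>)"
  let ?t = "\<lambda>\<sigma> \<tau>. if \<tau> = blk S2 Fm \<sigma> \<and> g \<in> blk S3 Gm \<tau> then ?nG \<tau> * (?nF \<sigma> * ?a \<sigma>) else 0"
  note Q = qs_morphismD(2)[OF F]
  have "Kmap C2 S2 C3 S3 Go Gm (Kmap C1 S1 C2 S2 Fo Fm a) g = (\<Sum>\<tau>\<in>S2. \<Sum>\<sigma>\<in>S1. ?t \<sigma> \<tau>)"
    unfolding Kmap_def
  proof (rule sum.cong[OF refl])
    fix \<tau> assume \<tau>: "\<tau> \<in> S2"
    have "(SOME f. f \<in> \<tau>) \<in> blk S2 Fm \<sigma> \<longleftrightarrow> \<tau> = blk S2 Fm \<sigma>" if "\<sigma> \<in> S1" for \<sigma>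
      using qs_block_unique[OF Q \<tau> blk_in[OF F that]] qs_some_in_block[OF Q \<tau>] by blast
    then have "(\<Sum>\<sigma>\<in>S1. if (SOME f. f \<in> \<tau>) \<in> blk S2 Fm \<sigma> then ?nF \<sigma> * ?a \<sigma> else 0)
        = (\<Sum>\<sigma>\<in>S1. if \<tau> = blk S2 Fm \<sigma> then ?nF \<sigma> * ?a \<sigma> else 0)"
      by (intro sum.cong) auto
    then show "(if g \<in> blk S3 Gm \<tau> then ?nG \<tau> *
          (\<Sum>\<sigma>\<in>S1. if (SOME f. f \<in> \<tau>) \<in> blk S2 Fm \<sigma> then ?nF \<sigma> * ?a \<sigma> else 0) else 0)
        = (\<Sum>\<sigma>\<in>S1. ?t \<sigma> \<tau>)"
      by (simp add: sum_distrib_left if_distrib[of "\<lambda>t. ?nG \<tau> * t"] cong: if_cong)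
  qed
  also have "\<dots> = (\<Sum>\<sigma>\<in>S1. \<Sum>\<tau>\<in>S2. ?t \<sigma> \<tau>)"
    by (rule sum.swap)
  also have "\<dots> = (\<Sum>\<sigma>\<in>S1. if g \<in> blk S3 Gm (blk S2 Fm \<sigma>)
      then ?nG (blk S2 Fm \<sigma>) * (?nF \<sigma> * ?a \<sigma>) else 0)"
  proof (rule sum.cong[OF refl])
    fix \<sigma> assume "\<sigma> \<in> S1"
    have "(\<Sum>\<tau>\<in>S2. ?t \<sigma> \<tau>) = (\<Sum>\<tau>\<in>S2. if \<tau> = blk S2 Fm \<sigma> then
        (if g \<in> blk S3 Gm (blk S2 Fm \<sigma>) then ?nG (blk S2 Fm \<sigma>) * (?nF \<sigma> * ?a \<sigma>) else 0) else 0)"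
      by (rule sum.cong[OF refl]) auto
    also have "\<dots> = (if g \<in> blk S3 Gm (blk S2 Fm \<sigma>) then ?nG (blk S2 Fm \<sigma>) * (?nF \<sigma> * ?a \<sigma>) else 0)"
      using fin blk_in[OF F \<open>\<sigma> \<in> S1\<close>] by (simp add: sum.delta)
    finally show "(\<Sum>\<tau>\<in>S2. ?t \<sigma> \<tau>)
        = (if g \<in> blk S3 Gm (blk S2 Fm \<sigma>) then ?nG (blk S2 Fm \<sigma>) * (?nF \<sigma> * ?a \<sigma>) else 0)" .
  qed
  finally show ?thesis .
qed

lemma Kmap_comp:
  assumes F: "admissible_basic C1 S1 C2 S2 Fo Fm" and G: "admissible_basic C2 S2 C3 S3 Go Gm"
  shows "Kmap C1 S1 C3 S3 (Go \<circ> Fo) (Gm \<circ> Fm) a = Kmap C2 S2 C3 S3 Go Gm (Kmap C1 S1 C2 S2 Fo Fm a)"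
proof
  fix g
  interpret F: admissible_basic C1 S1 C2 S2 Fo Fm by (rule F)
  interpret G: admissible_basic C2 S2 C3 S3 Go Gm by (rule G)
  show "Kmap C1 S1 C3 S3 (Go \<circ> Fo) (Gm \<circ> Fm) a g = Kmap C2 S2 C3 S3 Go Gm (Kmap C1 S1 C2 S2 Fo Fm a) g"
    unfolding Kmap_Kmap[OF F.qs_morphism qs_finite_blocks[OF F.target_qs F.target_finite]]
    unfolding Kmap_def
    by (rule sum.cong[OF refl])
      (simp add: nphi_comp[OF F G] blk_comp[OF F.qs_morphism G.qs_morphism] ac_simps)
qed

theorem theorem6p9:
  fixes C1 :: "('o1, 'm1) cat" and S1 :: "'m1 set set"
    and C2 :: "('o2, 'm2) cat" and S2 :: "'m2 set set"
    and C3 :: "('o3, 'm3) cat" and S3 :: "'m3 set set"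
    and Fo :: "'o1 \<Rightarrow> 'o2" and Fm :: "'m1 \<Rightarrow> 'm2"
    and Go :: "'o2 \<Rightarrow> 'o3" and Gm :: "'m2 \<Rightarrow> 'm3"
  shows
    \<comment> \<open>composites of admissible morphisms are admissible\<close>
    "(admissible C1 S1 C2 S2 Fo Fm \<and> admissible C2 S2 C3 S3 Go Gm
        \<longrightarrow> admissible C1 S1 C3 S3 (Go \<circ> Fo) (Gm \<circ> Fm))
   \<and> \<comment> \<open>identities are admissible (so B is a category)\<close>
     (quasi_schemoid C1 S1 \<longrightarrow> admissible C1 S1 C1 S1 id id)
   \<and> \<comment> \<open>K(C,S) is a (possibly nonunital) K-subalgebra of the category algebra\<close>
     (finite_basic C1 S1 \<longrightarrow>
        ((\<lambda>h. 0) :: 'm1 \<Rightarrow> 'k::comm_ring_1) \<in> sch_alg C1 S1 \<and>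
        (\<forall>a\<in>(sch_alg C1 S1 :: ('m1 \<Rightarrow> 'k) set). \<forall>b\<in>sch_alg C1 S1.
            (\<lambda>h. a h + b h) \<in> sch_alg C1 S1 \<and> cat_mult C1 a b \<in> sch_alg C1 S1) \<and>
        (\<forall>(c::'k) a. a \<in> sch_alg C1 S1 \<longrightarrow> (\<lambda>h. c * a h) \<in> sch_alg C1 S1))
   \<and> \<comment> \<open>K(phi) is a K-algebra homomorphism K(C1,S1) -> K(C2,S2) with s_pi |-> n_pi s_phi(pi)\<close>
     (finite_basic C1 S1 \<and> finite_basic C2 S2 \<and> admissible C1 S1 C2 S2 Fo Fm \<longrightarrow>
        (\<forall>\<pi>\<in>S1. Kmap C1 S1 C2 S2 Fo Fm (sblock \<pi> :: 'm1 \<Rightarrow> 'k)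
            = (\<lambda>h. of_nat (nphi C1 C2 S2 Fo Fm \<pi>) * sblock (blk S2 Fm \<pi>) h)) \<and>
        (\<forall>a\<in>sch_alg C1 S1. Kmap C1 S1 C2 S2 Fo Fm a \<in> (sch_alg C2 S2 :: ('m2 \<Rightarrow> 'k) set)) \<and>
        (\<forall>a\<in>(sch_alg C1 S1 :: ('m1 \<Rightarrow> 'k) set). \<forall>b\<in>sch_alg C1 S1.
            Kmap C1 S1 C2 S2 Fo Fm (\<lambda>h. a h + b h)
              = (\<lambda>h. Kmap C1 S1 C2 S2 Fo Fm a h + Kmap C1 S1 C2 S2 Fo Fm b h) \<and>
            Kmap C1 S1 C2 S2 Fo Fm (cat_mult C1 a b)
              = cat_mult C2 (Kmap C1 S1 C2 S2 Fo Fm a) (Kmap C1 S1 C2 S2 Fo Fm b)) \<and>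
        (\<forall>(c::'k) a. a \<in> sch_alg C1 S1 \<longrightarrow>
            Kmap C1 S1 C2 S2 Fo Fm (\<lambda>h. c * a h) = (\<lambda>h. c * Kmap C1 S1 C2 S2 Fo Fm a h)))
   \<and> \<comment> \<open>K(id) = id\<close>
     (finite_basic C1 S1 \<longrightarrow>
        (\<forall>a\<in>(sch_alg C1 S1 :: ('m1 \<Rightarrow> 'k) set). Kmap C1 S1 C1 S1 id id a = a))
   \<and> \<comment> \<open>K(psi o phi) = K(psi) o K(phi)\<close>
     (finite_basic C1 S1 \<and> finite_basic C2 S2 \<and> finite_basic C3 S3 \<and>
      admissible C1 S1 C2 S2 Fo Fm \<and> admissible C2 S2 C3 S3 Go Gm \<longrightarrow>
        (\<forall>a\<in>(sch_alg C1 S1 :: ('m1 \<Rightarrow> 'k) set).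
            Kmap C1 S1 C3 S3 (Go \<circ> Fo) (Gm \<circ> Fm) a
              = Kmap C2 S2 C3 S3 Go Gm (Kmap C1 S1 C2 S2 Fo Fm a)))"
  apply (intro conjI impI ballI allI; (elim conjE)?)
  subgoal by (rule admissible_comp)
  subgoal by (rule admissible_id)
  subgoal by (rule sch_alg_zero)
  subgoal by (rule sch_alg_add)
  subgoal by (rule sch_alg_cat_mult[OF finite_qsI])
  subgoal by (rule sch_alg_scale)
  subgoal by (rule Kmap_sblock[OF admissible_qs_morphism finite_qsD(3)[OF finite_qsI]])
  subgoal by (rule sch_alg_Kmap[OF admissible_qs_morphism finite_qsD(3)[OF finite_qsI]])
  subgoal by (rule Kmap_add)
  subgoal by (rule admissible_basic.Kmap_cat_mult[OF admissible_basic.intro])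
      (simp_all add: finite_basic_sch_alg_iff)
  subgoal by (rule Kmap_scale)
  subgoal by (rule Kmap_id[OF finite_qsI]) (simp_all add: finite_basic_sch_alg_iff)
  subgoal by (rule Kmap_comp) (simp_all add: admissible_basic.intro)
  done

end
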